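(* In the transaction packaging game described in the context, define $\hat p:M\to\mathbb{R}$ by $$\hat p(\mathsf{tx})=\frac{1}{|M|}\left(k+\sum_{\mathsf{tx}'\in M}\frac{\ln v(\mathsf{tx})-\ln v(\mathsf{tx}')}{\lambda}\right).$$ If $0\le\hat p(\mathsf{tx})\le 1$ for all $\mathsf{tx}\in M$, then the corresponding strategy of $\hat p$ (a mixed strategy $\sigma$ with $p^\sigma(\mathsf{tx})=\hat p(\mathsf{tx})$ for all $\mathsf{tx}\in M$) is an equilibrium strategy. Moreover, for all $\mathsf{tx}\in M$, $$v(\mathsf{tx})\exp(-\lambda\hat p(\mathsf{tx}))=\exp\left(-\frac{\lambda k}{|M|}\right)\exp\left(\frac{1}{|M|}\sum_{\mathsf{tx}'\in M}\ln v(\mathsf{tx}')\right).$$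
   Context: Transaction packaging game. Fix a positive integer $k$ (block capacity), a real $\lambda>0$ (network latency parameter), a finite set $M$ (the mempool) of transactions with $|M|\ge k$, and a gas price function $v:M\to(0,\infty)$. Miners are indexed by $i\in[0,1]$. A pure strategy of a miner is a subset $D\subseteq M$ with $|D|=k$; let $\mathcal{S}$ be the set of such subsets. A mixed strategy is a probability distribution $\sigma$ on $\mathcal{S}$, and its marginal probability is $p^\sigma(\mathsf{tx})=\sum_{D\in\mathcal{S}}\sigma(D)\mathbf{1}[\mathsf{tx}\in D]$. A corresponding strategy of a function $p:M\to[0,1]$ is a mixed strategy $\sigma$ with $p^\sigma(\mathsf{tx})=p(\mathsf{tx})$ for all $\mathsf{tx}\in M$. Conditional on miner $i$ mining a block $B_i$ (drawn from her mixed strategy $\sigma_i$), the number $\gamma$ of other blocks mined is distributed as $\mathrm{Poisson}(\lambda)$; they are mined by miners chosen independently and uniformly at random from $[0,1]$, each such miner $j$ producing a block $B_j$ drawn independently from her mixed strategy $\sigma_j$. The utility of miner $i$ is $u_i(\sigma_i,\sigma_{-i})=\sum_{\mathsf{tx}\in M}p^{\sigma_i}(\mathsf{tx})\,v(\mathsf{tx})\,\Pr[\text{no other mined block }B_j\ (j\neq i)\text{ contains }\mathsf{tx}]$. A mixed strategy $\sigma^*$ is an equilibrium strategy if for every $i\in[0,1]$ and every mixed strategy $\sigma$, $u_i(\sigma,\sigma^*_{-i})\le u_i(\sigma^*,\sigma^*_{-i})$, where $\sigma^*_{-i}$ denotes the profile in which all miners other than $i$ use $\sigma^*$. *)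

theory Defs
  imports "HOL-Analysis.Analysis"
begin

definition pure_strats :: "'a set \<Rightarrow> nat \<Rightarrow> 'a set set" where
  "pure_strats M k = {D. D \<subseteq> M \<and> card D = k}"

definition mixed_strategy :: "'a set \<Rightarrow> nat \<Rightarrow> ('a set \<Rightarrow> real) \<Rightarrow> bool" where
  "mixed_strategy M k \<sigma> \<longleftrightarrow>
     (\<forall>D\<in>pure_strats M k. 0 \<le> \<sigma> D) \<and> (\<Sum>D\<in>pure_strats M k. \<sigma> D) = 1"

definition marginal :: "'a set \<Rightarrow> nat \<Rightarrow> ('a set \<Rightarrow> real) \<Rightarrow> 'a \<Rightarrow> real" where
  "marginal M k \<sigma> tx = (\<Sum>D\<in>pure_strats M k. \<sigma> D * (if tx \<in> D then 1 else 0))"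

text \<open>Probability that none of the other mined blocks contains tx, when the number
  of other blocks is Poisson(lam) and each of them is produced independently by a
  miner using the mixed strategy \<sigma>s (so each contains tx independently with
  probability marginal \<sigma>s tx).\<close>
definition prob_not_included ::
  "'a set \<Rightarrow> nat \<Rightarrow> real \<Rightarrow> ('a set \<Rightarrow> real) \<Rightarrow> 'a \<Rightarrow> real" where
  "prob_not_included M k lam \<sigma>s tx =
     (\<Sum>n. exp (- lam) * lam ^ n / fact n * (1 - marginal M k \<sigma>s tx) ^ n)"

definition utility ::
  "'a set \<Rightarrow> nat \<Rightarrow> real \<Rightarrow> ('a \<Rightarrow> real) \<Rightarrow> ('a set \<Rightarrow> real) \<Rightarrow> ('a set \<Rightarrow> real) \<Rightarrow> real" where
  "utility M k lam v \<sigma> \<sigma>s =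
     (\<Sum>tx\<in>M. marginal M k \<sigma> tx * v tx * prob_not_included M k lam \<sigma>s tx)"

definition equilibrium_strategy ::
  "'a set \<Rightarrow> nat \<Rightarrow> real \<Rightarrow> ('a \<Rightarrow> real) \<Rightarrow> ('a set \<Rightarrow> real) \<Rightarrow> bool" where
  "equilibrium_strategy M k lam v \<sigma>s \<longleftrightarrow>
     mixed_strategy M k \<sigma>s \<and>
     (\<forall>i::real\<in>{0..1}. \<forall>\<sigma>. mixed_strategy M k \<sigma> \<longrightarrow>
        utility M k lam v \<sigma> \<sigma>s \<le> utility M k lam v \<sigma>s \<sigma>s)"

definition corresponding_strategy ::
  "'a set \<Rightarrow> nat \<Rightarrow> ('a \<Rightarrow> real) \<Rightarrow> ('a set \<Rightarrow> real) \<Rightarrow> bool" where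
  "corresponding_strategy M k p \<sigma> \<longleftrightarrow>
     mixed_strategy M k \<sigma> \<and> (\<forall>tx\<in>M. marginal M k \<sigma> tx = p tx)"

definition p_hat :: "'a set \<Rightarrow> nat \<Rightarrow> real \<Rightarrow> ('a \<Rightarrow> real) \<Rightarrow> 'a \<Rightarrow> real" where
  "p_hat M k lam v tx =
     (1 / real (card M)) * (real k + (\<Sum>tx'\<in>M. (ln (v tx) - ln (v tx')) / lam))"

end

theory Submission
  imports Defs
begin

text \<open>Since the number of competing blocks is Poisson(\<lambda>) and each of them contains tx
  independently with probability p(tx), tx survives with probability exp(-\<lambda> p(tx)).
  The weights p_hat are chosen so that the effective reward v(tx) exp(-\<lambda> p_hat(tx)) is
  the same constant C for every transaction. Against p_hat every pure strategy, hence every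
  mixed strategy, earns exactly k C, so no deviation is profitable.\<close>

lemma prob_not_included_eq_exp:
  "prob_not_included M k lam \<sigma> tx = exp (- lam * marginal M k \<sigma> tx)"
proof -
  let ?p = "marginal M k \<sigma> tx"
  have "(\<lambda>n. (lam * (1 - ?p)) ^ n / fact n) sums exp (lam * (1 - ?p))"
    using exp_converges[of "lam * (1 - ?p)"] by (simp add: divide_inverse mult.commute)
  then have "(\<lambda>n. exp (- lam) * ((lam * (1 - ?p)) ^ n / fact n))
      sums (exp (- lam) * exp (lam * (1 - ?p)))"
    by (rule sums_mult)
  then have "(\<lambda>n. exp (- lam) * lam ^ n / fact n * (1 - ?p) ^ n)
      sums (exp (- lam) * exp (lam * (1 - ?p)))"
    by (simp add: power_mult_distrib mult.assoc)
  then have "prob_not_included M k lam \<sigma> tx = exp (- lam) * exp (lam * (1 - ?p))"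
    unfolding prob_not_included_def by (simp add: sums_iff)
  also have "\<dots> = exp (- lam * ?p)"
    by (simp add: exp_add[symmetric] algebra_simps)
  finally show ?thesis .
qed

lemma sum_indicator_pure_strat:
  assumes "finite M" "D \<in> pure_strats M k"
  shows "(\<Sum>tx\<in>M. if tx \<in> D then 1 else 0 :: real) = real k"
proof -
  have "D \<subseteq> M" "card D = k" using assms(2) by (auto simp: pure_strats_def)
  then show ?thesis
    using assms(1) by (simp add: sum.If_cases Int_absorb1)
qed

lemma sum_marginal:
  assumes "finite M" "mixed_strategy M k \<sigma>"
  shows "(\<Sum>tx\<in>M. marginal M k \<sigma> tx) = real k"
proof -
  have "(\<Sum>tx\<in>M. marginal M k \<sigma> tx)
      = (\<Sum>D\<in>pure_strats M k. \<sigma> D * (\<Sum>tx\<in>M. if tx \<in> D then 1 else 0))"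
    unfolding marginal_def by (subst sum.swap) (simp add: sum_distrib_left)
  also have "\<dots> = (\<Sum>D\<in>pure_strats M k. \<sigma> D) * real k"
    using assms(1) by (simp add: sum_indicator_pure_strat sum_distrib_right)
  also have "\<dots> = real k"
    using assms(2) by (simp add: mixed_strategy_def)
  finally show ?thesis .
qed

lemma utility_eq_if_indifferent:
  assumes "finite M" "mixed_strategy M k \<sigma>"
    and "\<forall>tx\<in>M. v tx * prob_not_included M k lam \<sigma>s tx = C"
  shows "utility M k lam v \<sigma> \<sigma>s = C * real k"
proof -
  have "utility M k lam v \<sigma> \<sigma>s = (\<Sum>tx\<in>M. marginal M k \<sigma> tx * C)"
    unfolding utility_def using assms(3) by (intro sum.cong) (simp_all add: mult.assoc)
  also have "\<dots> = C * real k"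
    using sum_marginal[OF assms(1,2)] by (simp add: sum_distrib_right[symmetric])
  finally show ?thesis .
qed

lemma equilibrium_strategy_if_indifferent:
  assumes "finite M" "mixed_strategy M k \<sigma>s"
    and "\<forall>tx\<in>M. v tx * prob_not_included M k lam \<sigma>s tx = C"
  shows "equilibrium_strategy M k lam v \<sigma>s"
  using assms utility_eq_if_indifferent[OF assms(1) _ assms(3)]
  unfolding equilibrium_strategy_def by simp

lemma v_exp_p_hat:
  assumes "card M > 0" "lam \<noteq> 0" "v tx > 0"
  shows "v tx * exp (- lam * p_hat M k lam v tx) =
    exp (- lam * real k / real (card M)) * exp ((1 / real (card M)) * (\<Sum>tx'\<in>M. ln (v tx')))"
proof -
  let ?n = "real (card M)" and ?S = "\<Sum>tx'\<in>M. ln (v tx')"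
  have "(\<Sum>tx'\<in>M. (ln (v tx) - ln (v tx')) / lam) = (?n * ln (v tx) - ?S) / lam"
    by (simp add: sum_divide_distrib[symmetric] sum_subtractf)
  then have "- lam * p_hat M k lam v tx = - lam * real k / ?n - ln (v tx) + ?S / ?n"
    unfolding p_hat_def using assms(1,2) by (simp add: field_simps)
  then have "v tx * exp (- lam * p_hat M k lam v tx)
      = exp (ln (v tx)) * exp (- lam * real k / ?n - ln (v tx) + ?S / ?n)"
    using assms(3) by simp
  also have "\<dots> = exp (- lam * real k / ?n) * exp (?S / ?n)"
    by (simp add: exp_add[symmetric] exp_diff)
  finally show ?thesis by simp
qed

theorem lemma3p3:
  fixes M :: "'a set" and k :: nat and lam :: real and v :: "'a \<Rightarrow> real"
  assumes "finite M" and "0 < k" and "k \<le> card M" and "0 < lam"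
    and "\<forall>tx\<in>M. 0 < v tx"
    and "\<forall>tx\<in>M. 0 \<le> p_hat M k lam v tx \<and> p_hat M k lam v tx \<le> 1"
  shows "(\<forall>\<sigma>. corresponding_strategy M k (p_hat M k lam v) \<sigma> \<longrightarrow>
             equilibrium_strategy M k lam v \<sigma>)
       \<and> (\<forall>tx\<in>M. v tx * exp (- lam * p_hat M k lam v tx) =
             exp (- lam * real k / real (card M)) *
             exp ((1 / real (card M)) * (\<Sum>tx'\<in>M. ln (v tx'))))"
  (is "?equilibrium \<and> (\<forall>tx\<in>M. _ = ?C)")
proof -
  have indifferent: "\<forall>tx\<in>M. v tx * exp (- lam * p_hat M k lam v tx) = ?C"
    using assms(2-5) v_exp_p_hat[of M lam v] by simp
  have ?equilibrium
  proof (intro allI impI)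
    fix \<sigma> assume "corresponding_strategy M k (p_hat M k lam v) \<sigma>"
    then have "mixed_strategy M k \<sigma>" "\<forall>tx\<in>M. marginal M k \<sigma> tx = p_hat M k lam v tx"
      by (simp_all add: corresponding_strategy_def)
    with indifferent show "equilibrium_strategy M k lam v \<sigma>"
      by (intro equilibrium_strategy_if_indifferent[OF assms(1), where C = ?C])
        (simp_all add: prob_not_included_eq_exp)
  qed
  with indifferent show ?thesis by blast
qed

end
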